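(* Let $V=\{1,\dots,p\}$ and $F:2^V\to\mathbb{R}$ be submodular, nondecreasing, with $F(\varnothing)=0$ and $F(\{k\})>0$ for all $k$. Let $\Omega(w)=f(|w|)$ with $f$ the Lovász extension of $F$. Let $w\in\mathbb{R}^p$ with support $J=\mathrm{Supp}(w)$ and let $H$ be the smallest stable set containing $J$. Then, identifying $\mathbb{R}^V=\mathbb{R}^J\times\mathbb{R}^{H\setminus J}\times\mathbb{R}^{H^c}$, the subdifferential of $\Omega$ at $w$ is $$\partial\Omega(w)=\partial\Omega_J(w_J)\times\{0\}\times\{s_{H^c}\in\mathbb{R}^{H^c}:(\Omega^H)^\ast(s_{H^c})\leqslant1\}.$$
   Context: The Lovász extension of a set-function $G$ on a finite set $W$: for $w\in\mathbb{R}_+^W$ with $w_{j_1}\geqslant\cdots\geqslant w_{j_m}\geqslant0$, it equals $\sum_k w_{j_k}[G(\{j_1,\dots,j_k\})-G(\{j_1,\dots,j_{k-1}\})]$. A set $A\subset V$ is stable if every strict superset $B\supsetneq A$ has $F(B)>F(A)$; stable sets are closed under intersection and $V$ is stable, so the smallest stable set containing $J$ exists. For $K\subset V$: $\Omega_K(u)=f_K(|u|)$ on $\mathbb{R}^K$, where $f_K$ is the Lovász extension of the restriction $F_K(A)=F(A)$, $A\subset K$; $\Omega^K(v)=f^K(|v|)$ on $\mathbb{R}^{K^c}$, where $f^K$ is the Lovász extension of the contraction $F^K(A)=F(A\cup K)-F(K)$, $A\subset K^c$; $(\Omega^H)^\ast(s)=\max\{s^\top v:\Omega^H(v)\leqslant1\}$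 is the dual norm of $\Omega^H$. *)

theory Defs
  imports Complex_Main
begin

text \<open>Vectors in R^K (K a finite set of indices) are functions nat => real vanishing off K.\<close>
definition vecs :: "nat set \<Rightarrow> (nat \<Rightarrow> real) set" where
  "vecs K = {x. \<forall>i. i \<notin> K \<longrightarrow> x i = 0}"

definition restr :: "nat set \<Rightarrow> (nat \<Rightarrow> real) \<Rightarrow> nat \<Rightarrow> real" where
  "restr K x = (\<lambda>i. if i \<in> K then x i else 0)"

definition inner_on :: "nat set \<Rightarrow> (nat \<Rightarrow> real) \<Rightarrow> (nat \<Rightarrow> real) \<Rightarrow> real" where
  "inner_on K x y = (\<Sum>i\<in>K. x i * y i)"

definition subdiff :: "nat set \<Rightarrow> ((nat \<Rightarrow> real) \<Rightarrow> real) \<Rightarrow> (nat \<Rightarrow> real) \<Rightarrow> (nat \<Rightarrow> real) set" where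
  "subdiff W g x = {s \<in> vecs W. \<forall>u \<in> vecs W. g u \<ge> g x + inner_on W s (\<lambda>i. u i - x i)}"

text \<open>Lovasz extension of G on the finite set W, evaluated at w (with w >= 0 on W):
  order W as j_1,...,j_m with w nonincreasing and take the telescoping sum.\<close>
definition lovasz :: "(nat set \<Rightarrow> real) \<Rightarrow> nat set \<Rightarrow> (nat \<Rightarrow> real) \<Rightarrow> real" where
  "lovasz G W w =
    (let js = (SOME js. distinct js \<and> set js = W \<and> sorted_wrt (\<lambda>a b. w a \<ge> w b) js)
     in \<Sum>k<length js. w (js ! k) * (G (set (take (Suc k) js)) - G (set (take k js))))"

definition Omega :: "(nat set \<Rightarrow> real) \<Rightarrow> nat set \<Rightarrow> (nat \<Rightarrow> real) \<Rightarrow> real" where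
  "Omega F V u = lovasz F V (\<lambda>i. \<bar>u i\<bar>)"

definition Omega_restr :: "(nat set \<Rightarrow> real) \<Rightarrow> nat set \<Rightarrow> (nat \<Rightarrow> real) \<Rightarrow> real" where
  "Omega_restr F K u = lovasz F K (\<lambda>i. \<bar>u i\<bar>)"

definition Omega_contr :: "(nat set \<Rightarrow> real) \<Rightarrow> nat set \<Rightarrow> nat set \<Rightarrow> (nat \<Rightarrow> real) \<Rightarrow> real" where
  "Omega_contr F V K v = lovasz (\<lambda>A. F (A \<union> K) - F K) (V - K) (\<lambda>i. \<bar>v i\<bar>)"

definition dual_contr :: "(nat set \<Rightarrow> real) \<Rightarrow> nat set \<Rightarrow> nat set \<Rightarrow> (nat \<Rightarrow> real) \<Rightarrow> real" where
  "dual_contr F V K s = Sup {inner_on (V - K) s v | v. v \<in> vecs (V - K) \<and> Omega_contr F V K v \<le> 1}"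

definition stable :: "(nat set \<Rightarrow> real) \<Rightarrow> nat set \<Rightarrow> nat set \<Rightarrow> bool" where
  "stable F V A \<longleftrightarrow> A \<subseteq> V \<and> (\<forall>B. A \<subset> B \<and> B \<subseteq> V \<longrightarrow> F B > F A)"

definition submodular :: "(nat set \<Rightarrow> real) \<Rightarrow> nat set \<Rightarrow> bool" where
  "submodular F V \<longleftrightarrow> (\<forall>A B. A \<subseteq> V \<longrightarrow> B \<subseteq> V \<longrightarrow> F (A \<union> B) + F (A \<inter> B) \<le> F A + F B)"

definition nondecreasing :: "(nat set \<Rightarrow> real) \<Rightarrow> nat set \<Rightarrow> bool" where
  "nondecreasing F V \<longleftrightarrow> (\<forall>A B. A \<subseteq> B \<longrightarrow> B \<subseteq> V \<longrightarrow> F A \<le> F B)"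

end

(*
  The norm \<Omega> is the support function of the symmetric polyhedron
  |P|(F) = {s. \<forall>A. (\<Sum>i\<in>A. |s i|) \<le> F A}: the inequality is summation by parts along a
  decreasing ordering of |u|, and Edmonds' greedy vector of that ordering attains it. Hence
  \<partial>\<Omega>(w) is the face of |P|(F) on which s\<^sup>T w = \<Omega>(w). On this face the constraint of the
  support J is tight. Since F J = F H for the smallest stable H \<supseteq> J, the constraint of H then
  forces s = 0 on H - J, and the constraints of the sets A \<union> H become those of the polyhedron
  of the contraction F\<^sup>H, which is the dual unit ball of \<Omega>\<^sup>H. Conversely, submodularity glues
  the three blocks back into a point of |P|(F).
*)
theory Submission
  imports Defs
begin

definition desc_enum :: "(nat \<Rightarrow> real) \<Rightarrow> nat set \<Rightarrow> nat list \<Rightarrow> bool" where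
  "desc_enum w W js \<longleftrightarrow> distinct js \<and> set js = W \<and> sorted_wrt (\<lambda>a b. w a \<ge> w b) js"

lemma desc_enum_exists:
  assumes "finite W" shows "\<exists>js. desc_enum w W js"
proof -
  let ?js = "sort_key (\<lambda>i. - w i) (sorted_list_of_set W)"
  have "sorted_wrt (\<lambda>a b. w a \<ge> w b) ?js"
    using sorted_sort_key[of "\<lambda>i. - w i"] by (simp add: sorted_map)
  with assms show ?thesis unfolding desc_enum_def by (intro exI[of _ ?js]) simp
qed

lemma lovasz_desc_enum:
  assumes "finite W"
  obtains js where "desc_enum w W js"
    and "lovasz G W w = (\<Sum>k<length js. w (js!k) * (G (set (take (Suc k) js)) - G (set (take k js))))"
proof -
  let ?js = "SOME js. distinct js \<and> set js = W \<and> sorted_wrt (\<lambda>a b. w a \<ge> w b) js"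
  have "desc_enum w W ?js"
    using desc_enum_exists[OF assms] unfolding desc_enum_def by (rule someI_ex)
  then show ?thesis using that unfolding lovasz_def Let_def by blast
qed

lemma sum_mult_diff_by_parts:
  fixes a h :: "nat \<Rightarrow> 'a::comm_ring"
  assumes "h 0 = 0"
  shows "(\<Sum>k<m. a k * (h (Suc k) - h k)) = (\<Sum>k<m. (a k - (if Suc k < m then a (Suc k) else 0)) * h (Suc k))"
proof -
  have abel: "(\<Sum>k<n. b k * (h (Suc k) - h k)) = b n * h n - (\<Sum>k<n. (b (Suc k) - b k) * h (Suc k))"
    for n and b :: "nat \<Rightarrow> 'a"
    using assms by (induction n) (simp_all add: algebra_simps)
  define b where "b k = (if k < m then a k else 0)" for k
  have "(\<Sum>k<m. a k * (h (Suc k) - h k)) = (\<Sum>k<m. b k * (h (Suc k) - h k))"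
    by (simp add: b_def)
  also have "\<dots> = - (\<Sum>k<m. (b (Suc k) - b k) * h (Suc k))"
    using abel[of b m] by (simp add: b_def[of m])
  also have "\<dots> = (\<Sum>k<m. (b k - b (Suc k)) * h (Suc k))"
    by (simp add: sum_negf[symmetric] algebra_simps)
  also have "\<dots> = (\<Sum>k<m. (a k - (if Suc k < m then a (Suc k) else 0)) * h (Suc k))"
    by (simp add: b_def)
  finally show ?thesis .
qed

definition desc_gap :: "(nat \<Rightarrow> real) \<Rightarrow> nat list \<Rightarrow> nat \<Rightarrow> real" where
  "desc_gap w js k = w (js!k) - (if Suc k < length js then w (js!Suc k) else 0)"

lemma desc_gap_nonneg:
  assumes "desc_enum w W js" and "\<forall>i\<in>W. w i \<ge> 0" and "k < length js"
  shows "desc_gap w js k \<ge> 0"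
  using assms unfolding desc_enum_def desc_gap_def by (auto dest: sorted_wrt_nth_less)

lemma sum_mult_desc_enum:
  assumes "desc_enum w W js"
  shows "(\<Sum>i\<in>W. t i * w i) = (\<Sum>k<length js. desc_gap w js k * (\<Sum>i\<in>set (take (Suc k) js). t i))"
proof -
  have d: "distinct js" and W: "W = set js" using assms unfolding desc_enum_def by auto
  have step: "(\<Sum>i\<in>set (take (Suc k) js). t i) - (\<Sum>i\<in>set (take k js). t i) = t (js!k)"
    if "k < length js" for k
    using that d distinct_take[OF d, of "Suc k"] by (simp add: take_Suc_conv_app_nth)
  have "(\<Sum>i\<in>W. t i * w i) = (\<Sum>k<length js. w (js!k) *
      ((\<Sum>i\<in>set (take (Suc k) js). t i) - (\<Sum>i\<in>set (take k js). t i)))"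
    unfolding W using d
    by (simp add: sum.distinct_set_conv_list sum_list_sum_nth atLeast0LessThan step mult.commute)
  also have "\<dots> = (\<Sum>k<length js. desc_gap w js k * (\<Sum>i\<in>set (take (Suc k) js). t i))"
    unfolding desc_gap_def by (rule sum_mult_diff_by_parts) simp
  finally show ?thesis .
qed

lemma lovasz_by_parts:
  assumes "finite W" and "G {} = 0"
  obtains js where "desc_enum w W js"
    and "lovasz G W w = (\<Sum>k<length js. desc_gap w js k * G (set (take (Suc k) js)))"
proof -
  obtain js where "desc_enum w W js"
    and "lovasz G W w = (\<Sum>k<length js. w (js!k) * (G (set (take (Suc k) js)) - G (set (take k js))))"
    using lovasz_desc_enum[OF assms(1)] .
  moreover note sum_mult_diff_by_parts[of "\<lambda>k. G (set (take k js))" "\<lambda>k. w (js!k)" "length js"]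
  ultimately show ?thesis using that assms(2) unfolding desc_gap_def by simp
qed

lemma sum_mult_le_lovasz:
  assumes "finite W" and "G {} = 0" and "\<forall>i\<in>W. w i \<ge> 0"
    and bound: "\<forall>A\<subseteq>W. (\<Sum>i\<in>A. t i) \<le> G A"
  shows "(\<Sum>i\<in>W. t i * w i) \<le> lovasz G W w"
proof -
  obtain js where js: "desc_enum w W js"
    and L: "lovasz G W w = (\<Sum>k<length js. desc_gap w js k * G (set (take (Suc k) js)))"
    using lovasz_by_parts[where G = G, OF assms(1,2)] .
  have "set (take k js) \<subseteq> W" for k
    using js set_take_subset unfolding desc_enum_def by metis
  then show ?thesis
    unfolding L sum_mult_desc_enum[OF js]
    using bound desc_gap_nonneg[OF js assms(3)] by (intro sum_mono mult_left_mono) auto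
qed

text \<open>The last gap of the ordering is the smallest weight, hence positive, so the slack of the
  whole ground set must vanish.\<close>
lemma sum_eq_of_sum_mult_eq_lovasz:
  assumes "finite W" and "G {} = 0" and pos: "\<forall>i\<in>W. w i > 0"
    and bound: "\<forall>A\<subseteq>W. (\<Sum>i\<in>A. t i) \<le> G A"
    and eq: "(\<Sum>i\<in>W. t i * w i) = lovasz G W w"
  shows "(\<Sum>i\<in>W. t i) = G W"
proof (cases "W = {}")
  case True then show ?thesis using assms(2) by simp
next
  case False
  obtain js where js: "desc_enum w W js"
    and L: "lovasz G W w = (\<Sum>k<length js. desc_gap w js k * G (set (take (Suc k) js)))"
    using lovasz_by_parts[where G = G, OF assms(1,2)] .
  have W: "W = set js" using js unfolding desc_enum_def by auto
  define slack where "slack k = G (set (take (Suc k) js)) - (\<Sum>i\<in>set (take (Suc k) js). t i)" for k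
  have nonneg: "desc_gap w js k * slack k \<ge> 0" if "k < length js" for k
  proof -
    have "set (take (Suc k) js) \<subseteq> W" unfolding W by (rule set_take_subset)
    then have "slack k \<ge> 0" using bound unfolding slack_def by simp
    moreover have "desc_gap w js k \<ge> 0" using desc_gap_nonneg[OF js] pos that by fastforce
    ultimately show ?thesis by simp
  qed
  have "(\<Sum>k<length js. desc_gap w js k * slack k) = 0"
    using eq unfolding L sum_mult_desc_enum[OF js] slack_def
    by (simp add: right_diff_distrib sum_subtractf)
  then have zero: "desc_gap w js k * slack k = 0" if "k < length js" for k
    using sum_nonneg_eq_0_iff[of "{..<length js}" "\<lambda>k. desc_gap w js k * slack k"] nonneg that
    by (simp del: mult_eq_0_iff)
  define k where "k = length js - 1"
  have k: "k < length js" "Suc k = length js" using False W unfolding k_def by auto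
  then have "desc_gap w js k > 0" using pos W unfolding desc_gap_def by auto
  then have "slack k = 0" using zero[OF k(1)] by simp
  then show ?thesis using k W unfolding slack_def by simp
qed

definition greedy :: "(nat set \<Rightarrow> real) \<Rightarrow> nat list \<Rightarrow> nat \<Rightarrow> real" where
  "greedy G js i =
    (if i \<in> set js
     then G (insert i (set (takeWhile (\<lambda>j. j \<noteq> i) js))) - G (set (takeWhile (\<lambda>j. j \<noteq> i) js))
     else 0)"

lemma greedy_nth:
  assumes "distinct js" and "k < length js"
  shows "greedy G js (js!k) = G (set (take (Suc k) js)) - G (set (take k js))"
proof -
  have "takeWhile (\<lambda>j. j \<noteq> js!k) js = take k js"
    using assms by (intro takeWhile_eq_take_P_nth) (auto simp: nth_eq_iff_index_eq)
  moreover have "set (take (Suc k) js) = insert (js!k) (set (take k js))"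
    using assms(2) by (simp add: take_Suc_conv_app_nth)
  ultimately show ?thesis using assms(2) unfolding greedy_def by simp
qed

lemma greedy_nonneg:
  assumes "distinct js" and "nondecreasing G (set js)"
  shows "greedy G js i \<ge> 0"
proof (cases "i \<in> set js")
  case True
  then obtain k where k: "k < length js" "i = js!k" by (auto simp: in_set_conv_nth)
  have "set (take k js) \<subseteq> set (take (Suc k) js)" "set (take (Suc k) js) \<subseteq> set js"
    by (simp_all add: set_take_subset_set_take set_take_subset)
  then show ?thesis using assms(2) k greedy_nth[OF assms(1) k(1)] unfolding nondecreasing_def by auto
qed (simp add: greedy_def)

lemma greedy_sum_le:
  assumes d: "distinct js" and "G {} = 0" and sub: "submodular G (set js)"
    and A: "A \<subseteq> set js"
  shows "(\<Sum>i\<in>A. greedy G js i) \<le> G A"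
proof -
  have "\<forall>A\<subseteq>set (take n js). (\<Sum>i\<in>A. greedy G js i) \<le> G A" if "n \<le> length js" for n
    using that
  proof (induction n)
    case 0 then show ?case using assms(2) by simp
  next
    case (Suc n)
    then have n: "n < length js" by simp
    let ?P = "set (take n js)" and ?x = "js!n"
    have P: "set (take (Suc n) js) = insert ?x ?P" and x: "?x \<notin> ?P"
      using n distinct_take[OF d, of "Suc n"] by (simp_all add: take_Suc_conv_app_nth)
    show ?case
    proof (intro allI impI)
      fix A assume A: "A \<subseteq> set (take (Suc n) js)"
      show "(\<Sum>i\<in>A. greedy G js i) \<le> G A"
      proof (cases "?x \<in> A")
        case False
        then show ?thesis using A P Suc by auto
      next
        case True
        have fin: "finite A" using A finite_subset by blast
        have "A \<union> ?P \<subseteq> set js" "A \<inter> ?P \<subseteq> set js" "A \<subseteq> set js" "?P \<subseteq> set js"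
          using A set_take_subset[of "Suc n" js] set_take_subset[of n js] by blast+
        then have "G (A \<union> ?P) + G (A \<inter> ?P) \<le> G A + G ?P"
          using sub unfolding submodular_def by blast
        moreover have "A \<union> ?P = set (take (Suc n) js)" "A \<inter> ?P = A - {?x}"
          using A P x True by auto
        moreover have "(\<Sum>i\<in>A - {?x}. greedy G js i) \<le> G (A - {?x})"
          using Suc.IH n A P True by (simp add: subset_insert_iff)
        ultimately show ?thesis
          using True fin greedy_nth[OF d n, of G] by (simp add: sum.remove)
      qed
    qed
  qed
  from this[of "length js"] show ?thesis using A by simp
qed

definition sym_polyhedron :: "(nat set \<Rightarrow> real) \<Rightarrow> nat set \<Rightarrow> (nat \<Rightarrow> real) set" where
  "sym_polyhedron G W = {s \<in> vecs W. \<forall>A\<subseteq>W. (\<Sum>i\<in>A. \<bar>s i\<bar>) \<le> G A}"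

lemma inner_on_le_sum_abs: "inner_on W s u \<le> (\<Sum>i\<in>W. \<bar>s i\<bar> * \<bar>u i\<bar>)"
  unfolding inner_on_def by (intro sum_mono) (metis abs_ge_self abs_mult)

lemma inner_on_le_Omega:
  assumes "finite W" and "G {} = 0" and "s \<in> sym_polyhedron G W"
  shows "inner_on W s u \<le> Omega G W u"
proof -
  have "inner_on W s u \<le> (\<Sum>i\<in>W. \<bar>s i\<bar> * \<bar>u i\<bar>)" by (rule inner_on_le_sum_abs)
  also have "\<dots> \<le> Omega G W u"
    unfolding Omega_def using assms by (intro sum_mult_le_lovasz) (auto simp: sym_polyhedron_def)
  finally show ?thesis .
qed

lemma Omega_attained:
  assumes "finite W" and "G {} = 0" and "submodular G W" and "nondecreasing G W"
  obtains s where "s \<in> sym_polyhedron G W" and "inner_on W s u = Omega G W u"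
proof -
  obtain js where js: "desc_enum (\<lambda>i. \<bar>u i\<bar>) W js"
    and L: "Omega G W u = (\<Sum>k<length js. \<bar>u (js!k)\<bar> * (G (set (take (Suc k) js)) - G (set (take k js))))"
    unfolding Omega_def using lovasz_desc_enum[OF assms(1)] .
  have d: "distinct js" and W: "W = set js" using js unfolding desc_enum_def by auto
  define g where "g = greedy G js"
  define s where "s i = (if u i < 0 then - g i else g i)" for i
  have g: "g i \<ge> 0" for i unfolding g_def using greedy_nonneg d assms(4) W by blast
  have "\<bar>s i\<bar> = g i" for i unfolding s_def using g[of i] by simp
  moreover have "s \<in> vecs W" unfolding vecs_def s_def g_def greedy_def W by simp
  ultimately have "s \<in> sym_polyhedron G W"
    using greedy_sum_le[where G = G, OF d assms(2)] assms(3) unfolding sym_polyhedron_def g_def W by simp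
  moreover have "inner_on W s u = (\<Sum>i\<in>W. g i * \<bar>u i\<bar>)"
    unfolding inner_on_def s_def by (intro sum.cong) auto
  moreover have "\<dots> = Omega G W u"
    unfolding L unfolding W using d by (simp add: sum.distinct_set_conv_list sum_list_sum_nth
        atLeast0LessThan g_def greedy_nth mult.commute)
  ultimately show ?thesis using that by simp
qed

lemma Omega_zero: "Omega G W (\<lambda>i. 0) = 0"
  by (simp add: Omega_def lovasz_def)

lemma Omega_add_le:
  assumes "finite W" and "G {} = 0" and "submodular G W" and "nondecreasing G W"
  shows "Omega G W (\<lambda>i. x i + y i) \<le> Omega G W x + Omega G W y"
proof -
  obtain s where s: "s \<in> sym_polyhedron G W"
    and eq: "inner_on W s (\<lambda>i. x i + y i) = Omega G W (\<lambda>i. x i + y i)"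
    using Omega_attained[OF assms] .
  have "inner_on W s (\<lambda>i. x i + y i) = inner_on W s x + inner_on W s y"
    unfolding inner_on_def by (simp add: sum.distrib distrib_left)
  then show ?thesis
    using eq inner_on_le_Omega[OF assms(1,2) s, of x] inner_on_le_Omega[OF assms(1,2) s, of y] by simp
qed

definition signs_on :: "nat set \<Rightarrow> real \<Rightarrow> (nat \<Rightarrow> real) \<Rightarrow> nat \<Rightarrow> real" where
  "signs_on A c s i = (if i \<in> A then c * sgn (s i) else 0)"

lemma signs_on_vecs: "A \<subseteq> W \<Longrightarrow> signs_on A c s \<in> vecs W"
  unfolding signs_on_def vecs_def by auto

lemma inner_on_signs_on:
  assumes "finite W" and "A \<subseteq> W"
  shows "inner_on W s (signs_on A c s) = c * (\<Sum>i\<in>A. \<bar>s i\<bar>)"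
proof -
  have "inner_on W s (signs_on A c s) = (\<Sum>i\<in>A. s i * signs_on A c s i)"
    unfolding inner_on_def using assms by (intro sum.mono_neutral_right) (auto simp: signs_on_def)
  also have "\<dots> = c * (\<Sum>i\<in>A. \<bar>s i\<bar>)"
    unfolding sum_distrib_left by (intro sum.cong) (auto simp: signs_on_def abs_sgn)
  finally show ?thesis .
qed

lemma Omega_signs_on_le:
  assumes "finite W" and "G {} = 0" and "submodular G W" and "nondecreasing G W"
    and "A \<subseteq> W" and "c \<ge> 0"
  shows "Omega G W (signs_on A c s) \<le> c * G A"
proof -
  obtain t where t: "t \<in> sym_polyhedron G W" and eq: "inner_on W t (signs_on A c s) = Omega G W (signs_on A c s)"
    using Omega_attained[OF assms(1-4)] .
  have "inner_on W t (signs_on A c s) \<le> (\<Sum>i\<in>W. \<bar>t i\<bar> * \<bar>signs_on A c s i\<bar>)"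
    by (rule inner_on_le_sum_abs)
  also have "\<dots> \<le> (\<Sum>i\<in>A. \<bar>t i\<bar> * c)"
    using assms(1,5,6) by (subst sum.mono_neutral_right[of W A])
      (auto simp: signs_on_def abs_mult abs_sgn_eq intro!: sum_mono)
  also have "\<dots> \<le> c * G A"
  proof -
    have "(\<Sum>i\<in>A. \<bar>t i\<bar>) \<le> G A" using t assms(5) unfolding sym_polyhedron_def by blast
    then have "c * (\<Sum>i\<in>A. \<bar>t i\<bar>) \<le> c * G A" using assms(6) by (rule mult_left_mono)
    then show ?thesis by (simp add: sum_distrib_left mult.commute)
  qed
  finally show ?thesis using eq by simp
qed

lemma inner_on_diff: "inner_on W s (\<lambda>i. u i - x i) = inner_on W s u - inner_on W s x"
  unfolding inner_on_def by (simp add: right_diff_distrib sum_subtractf)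

text \<open>For a subgradient, the subgradient inequality at \<open>0\<close> and \<open>2x\<close> forces equality, and at
  \<open>x + signs_on A 1 s\<close> it forces the constraint of \<open>A\<close>.\<close>
lemma subdiff_Omega:
  assumes f: "finite W" and G0: "G {} = 0" and sub: "submodular G W" and mono: "nondecreasing G W"
    and x: "x \<in> vecs W"
  shows "subdiff W (Omega G W) x = {s \<in> sym_polyhedron G W. inner_on W s x = Omega G W x}"
proof (intro set_eqI iffI)
  fix s assume "s \<in> {s \<in> sym_polyhedron G W. inner_on W s x = Omega G W x}"
  then show "s \<in> subdiff W (Omega G W) x"
    using inner_on_le_Omega[where G = G, OF f G0] unfolding subdiff_def inner_on_diff
    by (auto simp: sym_polyhedron_def)
next
  fix s assume "s \<in> subdiff W (Omega G W) x"
  then have s: "s \<in> vecs W"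
    and subgrad: "\<And>u. u \<in> vecs W \<Longrightarrow> Omega G W u \<ge> Omega G W x + inner_on W s u - inner_on W s x"
    unfolding subdiff_def inner_on_diff by auto
  have le: "Omega G W x \<le> inner_on W s x"
    using subgrad[of "\<lambda>i. 0"] by (simp add: vecs_def Omega_zero inner_on_def)
  have "Omega G W (\<lambda>i. x i + x i) \<le> Omega G W x + Omega G W x"
    by (rule Omega_add_le[OF f G0 sub mono])
  moreover have "inner_on W s (\<lambda>i. x i + x i) = inner_on W s x + inner_on W s x"
    unfolding inner_on_def distrib_left by (rule sum.distrib)
  moreover have "(\<lambda>i. x i + x i) \<in> vecs W" using x by (simp add: vecs_def)
  ultimately have "inner_on W s x \<le> Omega G W x"
    using subgrad[of "\<lambda>i. x i + x i"] by simp
  with le have eq: "inner_on W s x = Omega G W x" by simp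
  have "(\<Sum>i\<in>A. \<bar>s i\<bar>) \<le> G A" if A: "A \<subseteq> W" for A
  proof -
    let ?u = "signs_on A 1 s"
    have "(\<lambda>i. x i + ?u i) \<in> vecs W" using x signs_on_vecs[OF A] by (simp add: vecs_def)
    then have "Omega G W x + inner_on W s (\<lambda>i. x i + ?u i) - inner_on W s x \<le> Omega G W (\<lambda>i. x i + ?u i)"
      by (rule subgrad)
    also have "\<dots> \<le> Omega G W x + Omega G W ?u" by (rule Omega_add_le[OF f G0 sub mono])
    finally have "inner_on W s ?u \<le> Omega G W ?u"
      by (simp add: inner_on_def sum.distrib distrib_left)
    then show ?thesis
      using Omega_signs_on_le[OF f G0 sub mono A, of 1 s] inner_on_signs_on[OF f A, of s 1] by simp
  qed
  then show "s \<in> {s \<in> sym_polyhedron G W. inner_on W s x = Omega G W x}"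
    using s eq by (simp add: sym_polyhedron_def)
qed

lemma scaled_in_sym_polyhedron:
  assumes "finite W" and "G {} = 0" and "nondecreasing G W" and pos: "\<forall>k\<in>W. G {k} > 0"
    and r: "r \<in> vecs W"
  obtains l where "l > 0" and "(\<lambda>i. l * r i) \<in> sym_polyhedron G W"
proof (cases "W = {}")
  case True
  then show ?thesis using that[of 1] r assms(2) by (simp add: sym_polyhedron_def)
next
  case False
  define c where "c = Min ((\<lambda>k. G {k}) ` W)"
  define M where "M = (\<Sum>i\<in>W. \<bar>r i\<bar>)"
  define l where "l = c / (M + 1)"
  have c: "c > 0" using assms(1) False pos unfolding c_def by (subst Min_gr_iff) auto
  have M: "M \<ge> 0" unfolding M_def by (simp add: sum_nonneg)
  have l: "l > 0" and lM: "l * M \<le> c"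
    using c M unfolding l_def by (auto simp: field_simps)
  have "(\<Sum>i\<in>A. \<bar>l * r i\<bar>) \<le> G A" if A: "A \<subseteq> W" for A
  proof (cases "A = {}")
    case True then show ?thesis using assms(2) by simp
  next
    case False
    then obtain k where k: "k \<in> A" by auto
    have "(\<Sum>i\<in>A. \<bar>l * r i\<bar>) = l * (\<Sum>i\<in>A. \<bar>r i\<bar>)"
      using l by (simp add: abs_mult sum_distrib_left)
    also have "\<dots> \<le> l * M"
      unfolding M_def using l A assms(1) by (intro mult_left_mono sum_mono2) auto
    also have "\<dots> \<le> G {k}"
      using lM assms(1) k A unfolding c_def by (meson Min_le finite_imageI image_eqI order_trans subsetD)
    also have "\<dots> \<le> G A" using assms(3) k A unfolding nondecreasing_def by auto
    finally show ?thesis .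
  qed
  then show ?thesis using that l r by (simp add: sym_polyhedron_def vecs_def)
qed

lemma sym_polyhedron_iff_dual_ball:
  assumes f: "finite W" and G0: "G {} = 0" and sub: "submodular G W" and mono: "nondecreasing G W"
    and pos: "\<forall>k\<in>W. G {k} > 0" and r: "r \<in> vecs W"
  shows "r \<in> sym_polyhedron G W \<longleftrightarrow> (\<forall>v\<in>vecs W. Omega G W v \<le> 1 \<longrightarrow> inner_on W r v \<le> 1)"
proof
  assume "r \<in> sym_polyhedron G W"
  then show "\<forall>v\<in>vecs W. Omega G W v \<le> 1 \<longrightarrow> inner_on W r v \<le> 1"
    using inner_on_le_Omega[where G = G, OF f G0] order_trans by blast
next
  assume ball: "\<forall>v\<in>vecs W. Omega G W v \<le> 1 \<longrightarrow> inner_on W r v \<le> 1"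
  have "(\<Sum>i\<in>A. \<bar>r i\<bar>) \<le> G A" if A: "A \<subseteq> W" for A
  proof (cases "A = {}")
    case True then show ?thesis using G0 by simp
  next
    case False
    then obtain k where "k \<in> A" by auto
    then have GA: "G A > 0"
      using pos A mono unfolding nondecreasing_def by (meson empty_subsetI insert_subset less_le_trans subsetD)
    let ?v = "signs_on A (1 / G A) r"
    have "Omega G W ?v \<le> 1"
      using Omega_signs_on_le[OF f G0 sub mono A, of "1 / G A" r] GA by simp
    then have "inner_on W r ?v \<le> 1" using ball signs_on_vecs[OF A] by blast
    then show ?thesis using inner_on_signs_on[OF f A, of r "1 / G A"] GA by simp
  qed
  then show "r \<in> sym_polyhedron G W" using r by (simp add: sym_polyhedron_def)
qed

lemma dual_norm_le_one_iff:
  assumes f: "finite W" and G0: "G {} = 0" and sub: "submodular G W" and mono: "nondecreasing G W"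
    and pos: "\<forall>k\<in>W. G {k} > 0" and r: "r \<in> vecs W"
  shows "Sup {inner_on W r v | v. v \<in> vecs W \<and> Omega G W v \<le> 1} \<le> 1 \<longleftrightarrow> r \<in> sym_polyhedron G W"
proof -
  let ?S = "{inner_on W r v | v. v \<in> vecs W \<and> Omega G W v \<le> 1}"
  have "?S \<noteq> {}" using Omega_zero by (fastforce simp: vecs_def)
  moreover have "bdd_above ?S"
  proof -
    obtain l where l: "l > 0" and lr: "(\<lambda>i. l * r i) \<in> sym_polyhedron G W"
      using scaled_in_sym_polyhedron[OF f G0 mono pos r] .
    have "x \<le> 1 / l" if "x \<in> ?S" for x
    proof -
      obtain v where v: "x = inner_on W r v" "Omega G W v \<le> 1" using \<open>x \<in> ?S\<close> by auto
      have "inner_on W (\<lambda>i. l * r i) v = l * x" unfolding v inner_on_def by (simp add: sum_distrib_left mult.assoc)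
      then have "l * x \<le> 1" using inner_on_le_Omega[OF f G0 lr, of v] v by simp
      then show ?thesis using l by (simp add: field_simps)
    qed
    then show ?thesis by (rule bdd_aboveI)
  qed
  ultimately show ?thesis
    unfolding sym_polyhedron_iff_dual_ball[OF assms] by (auto simp: cSup_le_iff)
qed

lemma submodular_subset:
  assumes "submodular F V" and "J \<subseteq> V"
  shows "submodular F J"
  unfolding submodular_def
proof (intro allI impI)
  fix A B assume "A \<subseteq> J" "B \<subseteq> J"
  then have "A \<subseteq> V" "B \<subseteq> V" using assms(2) by auto
  then show "F (A \<union> B) + F (A \<inter> B) \<le> F A + F B" using assms(1) unfolding submodular_def by simp
qed

lemma nondecreasing_subset:
  assumes "nondecreasing F V" and "J \<subseteq> V"
  shows "nondecreasing F J"
  unfolding nondecreasing_def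
proof (intro allI impI)
  fix A B assume "A \<subseteq> B" "B \<subseteq> J"
  then show "F A \<le> F B" using assms unfolding nondecreasing_def by auto
qed

definition contraction :: "(nat set \<Rightarrow> real) \<Rightarrow> nat set \<Rightarrow> nat set \<Rightarrow> real" where
  "contraction F K A = F (A \<union> K) - F K"

lemma contraction_empty [simp]: "contraction F K {} = 0"
  by (simp add: contraction_def)

lemma submodular_contraction:
  assumes "submodular F V" and "K \<subseteq> V"
  shows "submodular (contraction F K) (V - K)"
  unfolding submodular_def contraction_def
proof (intro allI impI)
  fix A B assume "A \<subseteq> V - K" "B \<subseteq> V - K"
  then have "A \<union> K \<subseteq> V" "B \<union> K \<subseteq> V" using assms(2) by auto
  then have "F ((A \<union> K) \<union> (B \<union> K)) + F ((A \<union> K) \<inter> (B \<union> K)) \<le> F (A \<union> K) + F (B \<union> K)"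
    using assms(1) unfolding submodular_def by blast
  moreover have "(A \<union> K) \<union> (B \<union> K) = A \<union> B \<union> K" "(A \<union> K) \<inter> (B \<union> K) = A \<inter> B \<union> K" by auto
  ultimately show "F (A \<union> B \<union> K) - F K + (F (A \<inter> B \<union> K) - F K)
      \<le> F (A \<union> K) - F K + (F (B \<union> K) - F K)"
    by simp
qed

lemma nondecreasing_contraction:
  assumes "nondecreasing F V" and "K \<subseteq> V"
  shows "nondecreasing (contraction F K) (V - K)"
  unfolding nondecreasing_def contraction_def
proof (intro allI impI)
  fix A B assume "A \<subseteq> B" "B \<subseteq> V - K"
  then have "A \<union> K \<subseteq> B \<union> K" "B \<union> K \<subseteq> V" using assms(2) by auto
  then show "F (A \<union> K) - F K \<le> F (B \<union> K) - F K" using assms(1) unfolding nondecreasing_def by simp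
qed

lemma contraction_singleton_pos:
  assumes "stable F V K" and "k \<in> V - K"
  shows "contraction F K {k} > 0"
  using assms unfolding stable_def contraction_def by auto

lemma Omega_restr_eq_Omega: "Omega_restr = Omega"
  by (intro ext) (simp add: Omega_restr_def Omega_def)

lemma dual_contr_eq:
  "dual_contr F V K r =
    Sup {inner_on (V - K) r v | v. v \<in> vecs (V - K) \<and> Omega (contraction F K) (V - K) v \<le> 1}"
  by (simp add: dual_contr_def Omega_contr_def Omega_def contraction_def[abs_def])

lemma restr_in_vecs: "restr K x \<in> vecs K"
  by (simp add: restr_def vecs_def)

lemma sym_polyhedron_restr:
  assumes "J \<subseteq> V" and "s \<in> sym_polyhedron F V"
  shows "restr J s \<in> sym_polyhedron F J"
proof -
  have "(\<Sum>i\<in>A. \<bar>restr J s i\<bar>) = (\<Sum>i\<in>A. \<bar>s i\<bar>)" if "A \<subseteq> J" for A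
    using that by (intro sum.cong) (auto simp: restr_def)
  then show ?thesis using assms by (auto simp: sym_polyhedron_def vecs_def restr_def)
qed

lemma sym_polyhedron_mono:
  assumes "finite V" and "nondecreasing F V" and "J \<subseteq> V" and t: "t \<in> sym_polyhedron F J"
  shows "t \<in> sym_polyhedron F V"
proof -
  have tJ: "t \<in> vecs J" using t by (simp add: sym_polyhedron_def)
  have "(\<Sum>i\<in>A. \<bar>t i\<bar>) \<le> F A" if A: "A \<subseteq> V" for A
  proof -
    have "(\<Sum>i\<in>A. \<bar>t i\<bar>) = (\<Sum>i\<in>A \<inter> J. \<bar>t i\<bar>)"
      using finite_subset[OF A assms(1)] tJ by (intro sum.mono_neutral_right) (auto simp: vecs_def)
    also have "\<dots> \<le> F (A \<inter> J)" using t by (simp add: sym_polyhedron_def)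
    also have "\<dots> \<le> F A" using assms(2) A unfolding nondecreasing_def by (simp add: Int_lower1)
    finally show ?thesis .
  qed
  moreover have "t \<in> vecs V" using tJ assms(3) by (auto simp: vecs_def)
  ultimately show ?thesis by (simp add: sym_polyhedron_def)
qed

lemma inner_on_restr_support:
  assumes "finite V" and "J \<subseteq> V" and "\<forall>i\<in>V - J. w i = 0"
  shows "inner_on J (restr J s) (restr J w) = inner_on V s w"
proof -
  have "inner_on V s w = (\<Sum>i\<in>J. s i * w i)"
    unfolding inner_on_def using assms by (intro sum.mono_neutral_right) auto
  then show ?thesis unfolding inner_on_def restr_def by simp
qed

lemma Omega_restr_support:
  assumes f: "finite V" and F0: "F {} = 0" and sub: "submodular F V" and mono: "nondecreasing F V"
    and J: "J \<subseteq> V" and w: "\<forall>i\<in>V - J. w i = 0"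
  shows "Omega F J (restr J w) = Omega F V w"
proof (rule antisym)
  have fJ: "finite J" using finite_subset[OF J f] .
  obtain t where t: "t \<in> sym_polyhedron F J" and eq: "inner_on J t (restr J w) = Omega F J (restr J w)"
    using Omega_attained[OF fJ F0 submodular_subset[OF sub J] nondecreasing_subset[OF mono J]] .
  have "restr J t = t" using t by (auto simp: sym_polyhedron_def vecs_def restr_def)
  then have "inner_on J t (restr J w) = inner_on V t w"
    using inner_on_restr_support[OF f J w, of t] by simp
  then show "Omega F J (restr J w) \<le> Omega F V w"
    using eq inner_on_le_Omega[OF f F0 sym_polyhedron_mono[OF f mono J t]] by simp
next
  have fJ: "finite J" using finite_subset[OF J f] .
  obtain s where s: "s \<in> sym_polyhedron F V" and eq: "inner_on V s w = Omega F V w"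
    using Omega_attained[OF f F0 sub mono] .
  then show "Omega F V w \<le> Omega F J (restr J w)"
    using inner_on_restr_support[OF f J w, of s] inner_on_le_Omega[OF fJ F0 sym_polyhedron_restr[OF J s], of "restr J w"]
    by simp
qed

text \<open>A superset of \<open>J\<close> that is inclusion-maximal among those with the same value as \<open>J\<close>
  is stable.\<close>
lemma exists_stable_superset_same_value:
  assumes "finite V" and mono: "nondecreasing F V" and "J \<subseteq> V"
  obtains K where "stable F V K" and "J \<subseteq> K" and "F K = F J"
proof -
  define \<B> where "\<B> = {B. J \<subseteq> B \<and> B \<subseteq> V \<and> F B = F J}"
  have "\<B> \<subseteq> Pow V" unfolding \<B>_def by blast
  then have "finite \<B>" using assms(1) by (simp add: finite_subset)
  moreover have "J \<in> \<B>" using assms(3) unfolding \<B>_def by simp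
  ultimately have "\<exists>K\<in>\<B>. J \<subseteq> K \<and> (\<forall>B\<in>\<B>. K \<subseteq> B \<longrightarrow> K = B)"
    by (rule finite_has_maximal2)
  then obtain K where K: "J \<subseteq> K" "K \<subseteq> V" "F K = F J" and max: "\<forall>B\<in>\<B>. K \<subseteq> B \<longrightarrow> K = B"
    unfolding \<B>_def by blast
  have "F B > F K" if B: "K \<subset> B" "B \<subseteq> V" for B
  proof -
    have "F K \<le> F B" using mono B unfolding nondecreasing_def by simp
    moreover have "F B \<noteq> F K"
    proof
      assume "F B = F K"
      moreover have "J \<subseteq> B" using K(1) B(1) by (rule subset_psubset_trans[THEN psubset_imp_subset])
      ultimately have "B \<in> \<B>" using B(2) K(3) unfolding \<B>_def by simp
      then show False using max B(1) by blast
    qed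
    ultimately show ?thesis by simp
  qed
  then have "stable F V K" using K(2) unfolding stable_def by blast
  then show ?thesis using K(1,3) by (rule that)
qed

lemma value_smallest_stable_superset:
  assumes "finite V" and mono: "nondecreasing F V" and "J \<subseteq> V"
    and H: "stable F V H" and JH: "J \<subseteq> H" and min: "\<forall>A. stable F V A \<and> J \<subseteq> A \<longrightarrow> H \<subseteq> A"
  shows "F J = F H"
proof -
  obtain K where K: "stable F V K" "J \<subseteq> K" "F K = F J"
    using exists_stable_superset_same_value[OF assms(1-3)] .
  have "H \<subseteq> K" using min K(1,2) by simp
  moreover have "K \<subseteq> V" "H \<subseteq> V" using K(1) H unfolding stable_def by simp_all
  ultimately have "F H \<le> F K" "F J \<le> F H" using mono JH unfolding nondecreasing_def by simp_all
  then show ?thesis using K(3) by simp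
qed

text \<open>The weight \<open>|w|\<close> is strictly positive on the support \<open>J\<close>.\<close>
lemma sum_abs_support_eq:
  assumes f: "finite V" and F0: "F {} = 0" and sub: "submodular F V" and mono: "nondecreasing F V"
    and J: "J = {i \<in> V. w i \<noteq> 0}" and w: "w \<in> vecs V"
    and s: "s \<in> sym_polyhedron F V" and eq: "inner_on V s w = Omega F V w"
  shows "(\<Sum>i\<in>J. \<bar>s i\<bar>) = F J"
proof -
  have JV: "J \<subseteq> V" and w0: "\<forall>i\<in>V - J. w i = 0" using J by auto
  have fJ: "finite J" using finite_subset[OF JV f] .
  have bound: "\<forall>A\<subseteq>J. (\<Sum>i\<in>A. \<bar>s i\<bar>) \<le> F A"
  proof (intro allI impI)
    fix A assume "A \<subseteq> J"
    then have "A \<subseteq> V" using JV by (rule subset_trans)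
    then show "(\<Sum>i\<in>A. \<bar>s i\<bar>) \<le> F A" using s by (simp add: sym_polyhedron_def)
  qed
  have pos: "\<forall>i\<in>J. \<bar>restr J w i\<bar> > 0" using J by (simp add: restr_def)
  have "(\<Sum>i\<in>J. \<bar>s i\<bar> * \<bar>restr J w i\<bar>) = Omega F J (restr J w)"
  proof (rule antisym)
    show "(\<Sum>i\<in>J. \<bar>s i\<bar> * \<bar>restr J w i\<bar>) \<le> Omega F J (restr J w)"
      unfolding Omega_def using fJ F0 bound by (intro sum_mult_le_lovasz) auto
    have "Omega F J (restr J w) = inner_on J (restr J s) (restr J w)"
      using Omega_restr_support[OF f F0 sub mono JV w0] inner_on_restr_support[OF f JV w0] eq by simp
    also have "\<dots> \<le> (\<Sum>i\<in>J. \<bar>restr J s i\<bar> * \<bar>restr J w i\<bar>)" by (rule inner_on_le_sum_abs)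
    finally show "Omega F J (restr J w) \<le> (\<Sum>i\<in>J. \<bar>s i\<bar> * \<bar>restr J w i\<bar>)"
      by (simp add: restr_def)
  qed
  then show ?thesis
    unfolding Omega_def by (rule sum_eq_of_sum_mult_eq_lovasz[OF fJ F0 pos bound])
qed

text \<open>With \<open>F J = F H\<close>, tightness on \<open>J\<close> and the constraint of \<open>H\<close> leave no room on \<open>H - J\<close>,
  and then the constraints of the sets \<open>A \<union> H\<close> become those of the contraction.\<close>
lemma sym_polyhedron_tight_split:
  assumes f: "finite V" and s: "s \<in> sym_polyhedron F V" and tight: "(\<Sum>i\<in>J. \<bar>s i\<bar>) = F J"
    and "J \<subseteq> H" and HV: "H \<subseteq> V" and FJH: "F J = F H"
  shows "(\<forall>i\<in>H - J. s i = 0) \<and> restr (V - H) s \<in> sym_polyhedron (contraction F H) (V - H)"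
proof -
  have fH: "finite H" using finite_subset[OF HV f] .
  have bound: "\<And>A. A \<subseteq> V \<Longrightarrow> (\<Sum>i\<in>A. \<bar>s i\<bar>) \<le> F A" using s by (simp add: sym_polyhedron_def)
  have "(\<Sum>i\<in>H. \<bar>s i\<bar>) = (\<Sum>i\<in>H - J. \<bar>s i\<bar>) + (\<Sum>i\<in>J. \<bar>s i\<bar>)"
    using sum.subset_diff[OF assms(4) fH] .
  then have "(\<Sum>i\<in>H - J. \<bar>s i\<bar>) \<le> 0" using bound[OF HV] tight FJH by simp
  then have zero: "\<forall>i\<in>H - J. s i = 0"
    using fH sum_nonneg_eq_0_iff[of "H - J" "\<lambda>i. \<bar>s i\<bar>"] by (simp add: antisym sum_nonneg)
  have HJ: "(\<Sum>i\<in>H. \<bar>s i\<bar>) = F H"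
    using sum.mono_neutral_right[OF fH assms(4), of "\<lambda>i. \<bar>s i\<bar>"] zero tight FJH by simp
  have "(\<Sum>i\<in>A. \<bar>restr (V - H) s i\<bar>) \<le> contraction F H A" if A: "A \<subseteq> V - H" for A
  proof -
    have "(\<Sum>i\<in>A. \<bar>restr (V - H) s i\<bar>) = (\<Sum>i\<in>A. \<bar>s i\<bar>)"
      using A by (intro sum.cong) (auto simp: restr_def)
    also have "\<dots> = (\<Sum>i\<in>A \<union> H. \<bar>s i\<bar>) - (\<Sum>i\<in>H. \<bar>s i\<bar>)"
      using finite_subset[OF A] f fH A by (subst sum.union_disjoint) auto
    also have "\<dots> \<le> contraction F H A"
      using bound[of "A \<union> H"] A HV HJ unfolding contraction_def by auto
    finally show ?thesis .
  qed
  then show ?thesis using zero by (simp add: sym_polyhedron_def vecs_def restr_def)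
qed

text \<open>Split \<open>A\<close> along \<open>H\<close>: the constraint of \<open>A \<inter> J\<close> and that of \<open>A - H\<close> in the contraction
  add up to the constraint of \<open>A\<close> by submodularity on \<open>A\<close> and \<open>H\<close>.\<close>
lemma sym_polyhedron_glue:
  assumes f: "finite V" and sub: "submodular F V" and mono: "nondecreasing F V"
    and JH: "J \<subseteq> H" and HV: "H \<subseteq> V" and s: "s \<in> vecs V"
    and sJ: "restr J s \<in> sym_polyhedron F J" and zero: "\<forall>i\<in>H - J. s i = 0"
    and sH: "restr (V - H) s \<in> sym_polyhedron (contraction F H) (V - H)"
  shows "s \<in> sym_polyhedron F V"
proof -
  have "(\<Sum>i\<in>A. \<bar>s i\<bar>) \<le> F A" if A: "A \<subseteq> V" for A
  proof -
    have fA: "finite A" using finite_subset[OF A f] .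
    have "(\<Sum>i\<in>A \<inter> H. \<bar>s i\<bar>) = (\<Sum>i\<in>A \<inter> J. \<bar>s i\<bar>)"
      using fA JH zero by (intro sum.mono_neutral_right) auto
    also have "\<dots> = (\<Sum>i\<in>A \<inter> J. \<bar>restr J s i\<bar>)"
      by (intro sum.cong) (simp_all add: restr_def)
    also have "\<dots> \<le> F (A \<inter> J)"
      using sJ Int_lower2 unfolding sym_polyhedron_def by blast
    also have "\<dots> \<le> F (A \<inter> H)"
    proof -
      have "A \<inter> J \<subseteq> A \<inter> H" "A \<inter> H \<subseteq> V" using JH A by auto
      then show ?thesis using mono unfolding nondecreasing_def by simp
    qed
    finally have inner: "(\<Sum>i\<in>A \<inter> H. \<bar>s i\<bar>) \<le> F (A \<inter> H)" .
    have "(\<Sum>i\<in>A - H. \<bar>s i\<bar>) = (\<Sum>i\<in>A - H. \<bar>restr (V - H) s i\<bar>)"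
      using A by (intro sum.cong) (auto simp: restr_def)
    also have "\<dots> \<le> contraction F H (A - H)"
      using sH A unfolding sym_polyhedron_def by (simp add: Diff_mono)
    also have "\<dots> = F (A \<union> H) - F H" by (simp add: contraction_def)
    finally have outer: "(\<Sum>i\<in>A - H. \<bar>s i\<bar>) \<le> F (A \<union> H) - F H" .
    have "F (A \<union> H) + F (A \<inter> H) \<le> F A + F H"
      using sub A HV unfolding submodular_def by blast
    moreover have "(\<Sum>i\<in>A. \<bar>s i\<bar>) = (\<Sum>i\<in>A \<inter> H. \<bar>s i\<bar>) + (\<Sum>i\<in>A - H. \<bar>s i\<bar>)"
      using fA by (rule sum.Int_Diff)
    ultimately show ?thesis using inner outer by linarith
  qed
  then show ?thesis using s by (simp add: sym_polyhedron_def)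
qed

lemma subdiff_Omega_blocks:
  assumes f: "finite V" and F0: "F {} = 0" and sub: "submodular F V" and mono: "nondecreasing F V"
    and w: "w \<in> vecs V" and J: "J = {i \<in> V. w i \<noteq> 0}"
    and JH: "J \<subseteq> H" and HV: "H \<subseteq> V" and FJH: "F J = F H"
  shows "subdiff V (Omega F V) w =
    {s \<in> vecs V. restr J s \<in> sym_polyhedron F J \<and> inner_on V s w = Omega F V w
      \<and> (\<forall>i \<in> H - J. s i = 0) \<and> restr (V - H) s \<in> sym_polyhedron (contraction F H) (V - H)}"
    (is "_ = ?R")
proof -
  have JV: "J \<subseteq> V" using J by auto
  note subdiff_V = subdiff_Omega[OF f F0 sub mono w]
  show ?thesis
  proof (intro set_eqI iffI)
    fix s assume "s \<in> subdiff V (Omega F V) w"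
    then have s: "s \<in> sym_polyhedron F V" and eq: "inner_on V s w = Omega F V w"
      unfolding subdiff_V by simp_all
    have "(\<Sum>i\<in>J. \<bar>s i\<bar>) = F J" by (rule sum_abs_support_eq[OF f F0 sub mono J w s eq])
    then have "(\<forall>i\<in>H - J. s i = 0) \<and> restr (V - H) s \<in> sym_polyhedron (contraction F H) (V - H)"
      by (rule sym_polyhedron_tight_split[OF f s _ JH HV FJH])
    moreover have "s \<in> vecs V" using s by (simp add: sym_polyhedron_def)
    ultimately show "s \<in> ?R" using sym_polyhedron_restr[OF JV s] eq by simp
  next
    fix s assume "s \<in> ?R"
    then show "s \<in> subdiff V (Omega F V) w"
      using sym_polyhedron_glue[OF f sub mono JH HV] by (simp add: subdiff_V)
  qed
qed

lemma subdiff_Omega_restr_support: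
  assumes f: "finite V" and F0: "F {} = 0" and sub: "submodular F V" and mono: "nondecreasing F V"
    and J: "J \<subseteq> V" and w: "\<forall>i\<in>V - J. w i = 0"
  shows "restr J s \<in> subdiff J (Omega F J) (restr J w) \<longleftrightarrow>
    restr J s \<in> sym_polyhedron F J \<and> inner_on V s w = Omega F V w"
proof -
  have fJ: "finite J" using finite_subset[OF J f] .
  show ?thesis
    unfolding subdiff_Omega[OF fJ F0 submodular_subset[OF sub J] nondecreasing_subset[OF mono J] restr_in_vecs]
    using inner_on_restr_support[OF f J w] Omega_restr_support[OF f F0 sub mono J w] by simp
qed

lemma dual_contr_le_one_iff:
  assumes f: "finite V" and sub: "submodular F V" and mono: "nondecreasing F V" and H: "stable F V H"
  shows "dual_contr F V H (restr (V - H) s) \<le> 1 \<longleftrightarrow>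
    restr (V - H) s \<in> sym_polyhedron (contraction F H) (V - H)"
proof -
  have HV: "H \<subseteq> V" using H by (simp add: stable_def)
  have pos: "\<forall>k\<in>V - H. contraction F H {k} > 0" using contraction_singleton_pos[OF H] by blast
  show ?thesis
    unfolding dual_contr_eq
    using dual_norm_le_one_iff[OF finite_Diff[OF f] contraction_empty submodular_contraction[OF sub HV]
        nondecreasing_contraction[OF mono HV] pos restr_in_vecs] .
qed

theorem lemma1:
  fixes p :: nat and F :: "nat set \<Rightarrow> real" and w :: "nat \<Rightarrow> real"
    and J H :: "nat set"
  assumes V: "V = {1..p}"
    and sub: "submodular F V"
    and mono: "nondecreasing F V"
    and F0: "F {} = 0"
    and Fpos: "\<forall>k\<in>V. F {k} > 0"
    and w: "w \<in> vecs V"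
    and J: "J = {i \<in> V. w i \<noteq> 0}"
    and H_stable: "stable F V H" and JH: "J \<subseteq> H"
    and H_min: "\<forall>A. stable F V A \<and> J \<subseteq> A \<longrightarrow> H \<subseteq> A"
  shows "subdiff V (Omega F V) w =
    {s \<in> vecs V. restr J s \<in> subdiff J (Omega_restr F J) (restr J w)
               \<and> (\<forall>i \<in> H - J. s i = 0)
               \<and> dual_contr F V H (restr (V - H) s) \<le> 1}"
proof -
  have f: "finite V" using V by simp
  have JV: "J \<subseteq> V" and w0: "\<forall>i\<in>V - J. w i = 0" using J by auto
  have HV: "H \<subseteq> V" using H_stable by (simp add: stable_def)
  have "F J = F H" by (rule value_smallest_stable_superset[OF f mono JV H_stable JH H_min])
  then have "subdiff V (Omega F V) w =
    {s \<in> vecs V. restr J s \<in> sym_polyhedron F J \<and> inner_on V s w = Omega F V w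
      \<and> (\<forall>i \<in> H - J. s i = 0) \<and> restr (V - H) s \<in> sym_polyhedron (contraction F H) (V - H)}"
    by (rule subdiff_Omega_blocks[OF f F0 sub mono w J JH HV])
  then show ?thesis
    unfolding Omega_restr_eq_Omega subdiff_Omega_restr_support[OF f F0 sub mono JV w0]
      dual_contr_le_one_iff[OF f sub mono H_stable] by (simp add: conj_assoc)
qed

end
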